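(* Let $P\in\mathbb{R}_+^{n\times n}$ be a sub-stochastic out-connected matrix and $w\in\mathbb{R}^n_+$. Then for every $c\in\mathbb{R}^n$ the equation $x=S_0^w(P'x+c)$ has a unique solution $x\in\mathbb{R}^n$.
   Context: $P$ sub-stochastic: nonnegative with $P\mathbbm{1}\le\mathbbm{1}$. The graph $\mathcal G_P$ has node set $\{1,\dots,n\}$ and a directed link $(i,j)$ whenever $P_{ij}>0$. Let $\mathcal O=\{i:\,\sum_jP_{ij}<1\}$. $P$ is out-connected if $\mathcal O$ is nonempty and from every node of $\mathcal G_P$ there is a directed path to some node in $\mathcal O$. $(S_0^w(x))_i=\min\{\max\{x_i,0\},w_i\}$; $P'$ is the transpose. *)

theory Defs
  imports "HOL-Analysis.Analysis"
begin

definition nonneg_mat :: "real^'n^'n \<Rightarrow> bool" where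
  "nonneg_mat P \<longleftrightarrow> (\<forall>i j. P $ i $ j \<ge> 0)"

definition substochastic :: "real^'n^'n::finite \<Rightarrow> bool" where
  "substochastic P \<longleftrightarrow> nonneg_mat P \<and> (\<forall>i. (\<Sum>j\<in>UNIV. P $ i $ j) \<le> 1)"

definition graph_edges :: "real^'n^'n \<Rightarrow> ('n \<times> 'n) set" where
  "graph_edges P = {(i, j). P $ i $ j > 0}"

definition deficient_nodes :: "real^'n^'n::finite \<Rightarrow> 'n set" where
  "deficient_nodes P = {i. (\<Sum>j\<in>UNIV. P $ i $ j) < 1}"

definition out_connected :: "real^'n^'n::finite \<Rightarrow> bool" where
  "out_connected P \<longleftrightarrow> deficient_nodes P \<noteq> {} \<and>
     (\<forall>i. \<exists>k\<in>deficient_nodes P. (i, k) \<in> (graph_edges P)\<^sup>*)"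

definition sat :: "real^'n \<Rightarrow> real^'n \<Rightarrow> real^'n" where
  "sat w x = (\<chi> i. min (max (x $ i) 0) (w $ i))"

end

theory Submission
  imports Defs
begin

text \<open>Existence is Brouwer's theorem on the box \<open>[0, w]\<close>, which the saturation maps into
  itself. For uniqueness, the gap \<open>d = |x - y|\<close> between two solutions is nonnegative with
  \<open>d \<le> P' d\<close>, since \<open>S\<^sub>0\<^sup>w\<close> is nonexpansive in each coordinate. Summing over all coordinates,
  \<open>\<Sum> d \<le> \<Sum> P' d = \<Sum>\<^sub>j (\<Sum>\<^sub>i P\<^sub>j\<^sub>i) d\<^sub>j \<le> \<Sum> d\<close>, so all inequalities are equalities: \<open>d = P' d\<close>
  and \<open>d\<close> vanishes on the deficient nodes. From \<open>d = P' d\<close>, a zero of \<open>d\<close> at \<open>j\<close> forces a zero at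
  every \<open>i\<close> with \<open>P\<^sub>i\<^sub>j > 0\<close>, so by out-connectedness the zeros spread to every node.\<close>

lemma transpose_mult_vec_nth:
  "(transpose P *v x) $ i = (\<Sum>j\<in>UNIV. P $ j $ i * x $ j)"
  by (simp add: matrix_vector_mult_def transpose_def)

lemma sum_transpose_mult_vec:
  fixes P :: "'a::comm_semiring_1^'n^'n::finite"
  shows "(\<Sum>i\<in>UNIV. (transpose P *v x) $ i) = (\<Sum>j\<in>UNIV. (\<Sum>i\<in>UNIV. P $ j $ i) * x $ j)"
  unfolding transpose_mult_vec_nth sum_distrib_right by (rule sum.swap)

lemma sat_nth_nonexpansive: "\<bar>sat w a $ i - sat w b $ i\<bar> \<le> \<bar>a $ i - b $ i\<bar>"
  unfolding sat_def by auto

lemma sat_in_box: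
  assumes "\<forall>i. w $ i \<ge> 0"
  shows "sat w x \<in> cbox 0 w"
  using assms by (auto simp: mem_box_cart sat_def)

lemma continuous_on_sat: "continuous_on S f \<Longrightarrow> continuous_on S (\<lambda>x. sat w (f x))"
  unfolding sat_def by (intro continuous_intros)

lemma sat_fixpoint_exists:
  fixes f :: "real^'n \<Rightarrow> real^'n"
  assumes "\<forall>i. w $ i \<ge> 0" and "continuous_on (cbox 0 w) f"
  shows "\<exists>x. x = sat w (f x)"
proof -
  have "cbox 0 w \<noteq> {}"
    using sat_in_box[OF assms(1)] by (metis empty_iff)
  moreover have "(\<lambda>x. sat w (f x)) \<in> cbox 0 w \<rightarrow> cbox 0 w"
    by (simp add: Pi_iff sat_in_box[OF assms(1)])
  ultimately obtain x where "sat w (f x) = x"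
    using brouwer[OF compact_cbox convex_box(1) _ continuous_on_sat[OF assms(2)]] by blast
  then show ?thesis by (intro exI[of _ x]) simp
qed

lemma substochastic_subinvariant_eq:
  fixes P :: "real^'n^'n::finite"
  assumes "substochastic P"
    and nonneg: "\<forall>i. d $ i \<ge> 0" and subinvariant: "\<forall>i. d $ i \<le> (transpose P *v d) $ i"
  shows "transpose P *v d = d" and "\<forall>k\<in>deficient_nodes P. d $ k = 0"
proof -
  let ?r = "\<lambda>j. \<Sum>i\<in>UNIV. P $ j $ i"
  have row_le: "?r j * d $ j \<le> d $ j" for j
  proof (rule mult_left_le_one_le)
    show "0 \<le> ?r j" "?r j \<le> 1"
      using assms(1) by (auto simp: substochastic_def nonneg_mat_def intro: sum_nonneg)
  qed (use nonneg in simp)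
  have "(\<Sum>i\<in>UNIV. d $ i) \<le> (\<Sum>i\<in>UNIV. (transpose P *v d) $ i)"
    using subinvariant by (intro sum_mono) simp
  moreover have "(\<Sum>i\<in>UNIV. (transpose P *v d) $ i) \<le> (\<Sum>i\<in>UNIV. d $ i)"
    unfolding sum_transpose_mult_vec using row_le by (rule sum_mono)
  ultimately have sum_eq: "(\<Sum>i\<in>UNIV. d $ i) = (\<Sum>i\<in>UNIV. (transpose P *v d) $ i)"
    by (rule order.antisym)
  have "d $ i = (transpose P *v d) $ i" for i
    by (rule sum_mono_inv[OF sum_eq]) (use subinvariant in simp_all)
  then show "transpose P *v d = d"
    by (simp add: vec_eq_iff)
  have row_sum_eq: "(\<Sum>j\<in>UNIV. ?r j * d $ j) = (\<Sum>j\<in>UNIV. d $ j)"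
    using sum_eq unfolding sum_transpose_mult_vec by simp
  have row_full: "?r j * d $ j = d $ j" for j
    by (rule sum_mono_inv[OF row_sum_eq]) (use row_le in simp_all)
  show "\<forall>k\<in>deficient_nodes P. d $ k = 0"
  proof
    fix k
    assume "k \<in> deficient_nodes P"
    then have "?r k \<noteq> 1"
      by (simp add: deficient_nodes_def)
    with row_full[of k] show "d $ k = 0"
      by simp
  qed
qed

lemma transpose_fixed_vector_zero_backward:
  fixes P :: "real^'n^'n::finite"
  assumes "nonneg_mat P" and nonneg: "\<forall>i. d $ i \<ge> 0" and "transpose P *v d = d"
    and "P $ i $ j > 0" and "d $ j = 0"
  shows "d $ i = 0"
proof -
  have "P $ i $ j * d $ i \<le> (\<Sum>l\<in>UNIV. P $ l $ j * d $ l)"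
    using assms(1) nonneg
    by (intro member_le_sum[where f = "\<lambda>l. P $ l $ j * d $ l"]) (auto simp: nonneg_mat_def)
  also have "\<dots> = (transpose P *v d) $ j"
    by (simp only: transpose_mult_vec_nth)
  also have "\<dots> = 0"
    using assms(3,5) by simp
  finally have "d $ i \<le> 0"
    using assms(4) by (simp add: mult_le_0_iff)
  with nonneg show ?thesis
    by (metis order.antisym)
qed

lemma out_connected_subinvariant_eq_0:
  fixes P :: "real^'n^'n::finite"
  assumes "substochastic P" and "out_connected P"
    and nonneg: "\<forall>i. d $ i \<ge> 0" and subinvariant: "\<forall>i. d $ i \<le> (transpose P *v d) $ i"
  shows "d = 0"
proof -
  note invariant = substochastic_subinvariant_eq[OF assms(1) nonneg subinvariant]
  have "nonneg_mat P"
    using assms(1) by (simp add: substochastic_def)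
  have zero_spreads: "d $ i = 0" if "(i, k) \<in> (graph_edges P)\<^sup>*" and "d $ k = 0" for i k
    using that
  proof (induction rule: converse_rtrancl_induct)
    case base
    then show ?case .
  next
    case (step i j)
    then have "P $ i $ j > 0" and "d $ j = 0"
      by (simp_all add: graph_edges_def)
    then show ?case
      by (rule transpose_fixed_vector_zero_backward[OF \<open>nonneg_mat P\<close> nonneg invariant(1)])
  qed
  show ?thesis
    unfolding vec_eq_iff zero_index
  proof
    fix i
    obtain k where "k \<in> deficient_nodes P" and "(i, k) \<in> (graph_edges P)\<^sup>*"
      using assms(2) by (auto simp: out_connected_def)
    with invariant(2) show "d $ i = 0"
      by (blast intro: zero_spreads)
  qed
qed

lemma sat_fixpoint_gap_subinvariant:
  fixes P :: "real^'n^'n::finite"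
  assumes "nonneg_mat P"
    and "x = sat w (transpose P *v x + c)" and "y = sat w (transpose P *v y + c)"
  shows "\<bar>x $ i - y $ i\<bar> \<le> (transpose P *v (\<chi> j. \<bar>x $ j - y $ j\<bar>)) $ i"
proof -
  have "\<bar>x $ i - y $ i\<bar> \<le> \<bar>(transpose P *v x + c) $ i - (transpose P *v y + c) $ i\<bar>"
    using sat_nth_nonexpansive[of w "transpose P *v x + c" i "transpose P *v y + c"]
    by (simp only: assms(2,3)[symmetric])
  also have "\<dots> = \<bar>\<Sum>j\<in>UNIV. P $ j $ i * (x $ j - y $ j)\<bar>"
    unfolding vector_add_component transpose_mult_vec_nth by (simp add: sum_subtractf algebra_simps)
  also have "\<dots> \<le> (\<Sum>j\<in>UNIV. \<bar>P $ j $ i * (x $ j - y $ j)\<bar>)"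
    by (rule sum_abs)
  also have "\<dots> = (transpose P *v (\<chi> j. \<bar>x $ j - y $ j\<bar>)) $ i"
    using assms(1) unfolding transpose_mult_vec_nth by (simp add: abs_mult nonneg_mat_def)
  finally show ?thesis .
qed

theorem proposition3:
  fixes P :: "real^'n^'n::finite" and w c :: "real^'n"
  assumes "substochastic P" and "out_connected P"
    and "\<forall>i. w $ i \<ge> 0"
  shows "\<exists>!x :: real^'n. x = sat w (transpose P *v x + c)"
proof (rule ex_ex1I)
  show "\<exists>x. x = sat w (transpose P *v x + c)"
    by (rule sat_fixpoint_exists[OF assms(3)]) (intro continuous_intros)
next
  fix x y
  assume x: "x = sat w (transpose P *v x + c)" and y: "y = sat w (transpose P *v y + c)"
  have "nonneg_mat P"
    using assms(1) by (simp add: substochastic_def)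
  then have "\<forall>i. (\<chi> j. \<bar>x $ j - y $ j\<bar>) $ i \<le> (transpose P *v (\<chi> j. \<bar>x $ j - y $ j\<bar>)) $ i"
    using sat_fixpoint_gap_subinvariant[OF _ x y] by simp
  then have "(\<chi> j. \<bar>x $ j - y $ j\<bar>) = 0"
    using out_connected_subinvariant_eq_0[OF assms(1,2)] by simp
  then show "x = y"
    by (simp add: vec_eq_iff)
qed

end
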